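(* Let $X$ be a rank-one subshift with cut sequence $(r_n)$ and spacer sequence $(s_{n,i})$, and suppose there are nonnegative integers $c<d$ such that for all sufficiently large $n$: $s_{n,r_n}=0$ and $s_{n,i}\in\{c,d\}$ for all $0\le i<r_n$, with both values occurring among $0\le i<r_n$. Then there exists a rank-one subshift generating the same language whose spacer sequence $(\tilde s_{n,i})$ (with the same cut sequence) satisfies, for all sufficiently large $n$, $\tilde s_{n,r_n}=0$ and $\tilde s_{n,i}\in\{0,d-c\}$ for all $0\le i<r_n$, with both values occurring.
   Context: A rank-one subshift with cut sequence $(r_n)_{n\ge1}$ (positive integers) and spacer sequence $(s_{n,i})_{n\ge1,\,0\le i\le r_n}$ (nonnegative integers) is defined by $B_1=0$, $B_{n+1}=B_n1^{s_{n,0}}B_n1^{s_{n,1}}\cdots B_n1^{s_{n,r_n}}$; it is the set of $x\in\{0,1\}^{\mathbb Z}$ all of whose finite subwords are subwords of some $B_n$. Its language is the set of finite words occurring in its elements. *)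

theory Defs
  imports Main "HOL-Library.Sublist"
begin

text \<open>Words over the alphabet {0,1} are lists of naturals. The cut sequence is
  r :: nat => nat and the spacer sequence is s :: nat => nat => nat, where s n i is
  the spacer s_{n,i}; only indices n >= 1 are meaningful.
  rk1_block r s n is the block B_n for n >= 1 (the value at n = 0 is junk).\<close>

fun rk1_block :: "(nat \<Rightarrow> nat) \<Rightarrow> (nat \<Rightarrow> nat \<Rightarrow> nat) \<Rightarrow> nat \<Rightarrow> nat list" where
  "rk1_block r s 0 = [0]"
| "rk1_block r s (Suc n) =
     (if n = 0 then [0]
      else concat (map (\<lambda>i. rk1_block r s n @ replicate (s n i) 1) [0..<Suc (r n)]))"

definition seg :: "(int \<Rightarrow> nat) \<Rightarrow> int \<Rightarrow> nat \<Rightarrow> nat list" where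
  "seg x i k = map (\<lambda>j. x (i + int j)) [0..<k]"

definition rank_one_subshift :: "(nat \<Rightarrow> nat) \<Rightarrow> (nat \<Rightarrow> nat \<Rightarrow> nat) \<Rightarrow> (int \<Rightarrow> nat) set" where
  "rank_one_subshift r s =
     {x. (\<forall>i. x i \<in> {0, 1}) \<and>
         (\<forall>i k. \<exists>n\<ge>1. sublist (seg x i k) (rk1_block r s n))}"

definition rank_one_language :: "(nat \<Rightarrow> nat) \<Rightarrow> (nat \<Rightarrow> nat \<Rightarrow> nat) \<Rightarrow> nat list set" where
  "rank_one_language r s =
     {w. \<exists>x\<in>rank_one_subshift r s. \<exists>i. w = seg x i (length w)}"

end

theory Submission
  imports Defs
begin

text \<open>From level N on, move c ones from the end of every spacer to the end of the block:
  each of the first r_n spacers loses c, and the last spacer of level N - 1 gains c.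
  Then the new blocks are B'_n = B_n 1^c for n \<ge> N, so B_n is a subword of B'_n and,
  since the first spacer of level n is at least c, B'_n is a prefix of B_{n+1}. Hence both
  block families have the same subwords, and the two subshifts coincide.\<close>

lemma rk1_block_cong:
  "(\<And>m. m < n \<Longrightarrow> s' m = s m) \<Longrightarrow> rk1_block r s' n = rk1_block r s n"
  by (induction n) auto

lemma rk1_block_Suc_unfold:
  "n \<ge> 1 \<Longrightarrow> rk1_block r s (Suc n) =
     concat (map (\<lambda>i. rk1_block r s n @ replicate (s n i) 1) [0..<r n])
     @ rk1_block r s n @ replicate (s n (r n)) 1"
  by simp

lemma prefix_rk1_block_first_spacer:
  assumes "n \<ge> 1"
  shows "prefix (rk1_block r s n @ replicate (s n 0) 1) (rk1_block r s (Suc n))"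
proof -
  have "[0..<Suc (r n)] = 0 # [1..<Suc (r n)]" by (simp add: upt_conv_Cons)
  then show ?thesis using assms by simp
qed

lemma sublist_rk1_block_mono:
  assumes "1 \<le> n" "n \<le> m" "sublist w (rk1_block r s n)"
  shows "sublist w (rk1_block r s m)"
  using assms(2,3)
proof (induction m rule: dec_induct)
  case (step m)
  have "prefix (rk1_block r s m) (rk1_block r s (Suc m))"
    using prefix_rk1_block_first_spacer[of m r s] step.hyps assms(1) append_prefixD by auto
  with step.IH step.prems show ?case
    by (meson prefix_imp_sublist sublist_order.dual_order.trans)
qed simp

lemma sublist_rk1_block_transfer:
  assumes "\<And>n. N \<le> n \<Longrightarrow> \<exists>m\<ge>1. sublist (rk1_block r s n) (rk1_block r s' m)"
    and "n \<ge> 1" "sublist w (rk1_block r s n)"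
  shows "\<exists>m\<ge>1. sublist w (rk1_block r s' m)"
proof -
  have "sublist w (rk1_block r s (max n N))"
    using sublist_rk1_block_mono[OF assms(2) _ assms(3)] by simp
  moreover obtain m where "m \<ge> 1" "sublist (rk1_block r s (max n N)) (rk1_block r s' m)"
    using assms(1)[of "max n N"] by auto
  ultimately show ?thesis by (meson sublist_order.dual_order.trans)
qed

lemma rank_one_language_eqI:
  assumes "\<And>n. N \<le> n \<Longrightarrow> \<exists>m\<ge>1. sublist (rk1_block r s n) (rk1_block r s' m)"
    and "\<And>n. N \<le> n \<Longrightarrow> \<exists>m\<ge>1. sublist (rk1_block r s' n) (rk1_block r s m)"
  shows "rank_one_language r s' = rank_one_language r s"
proof -
  have "(\<exists>n\<ge>1. sublist w (rk1_block r s' n)) \<longleftrightarrow> (\<exists>n\<ge>1. sublist w (rk1_block r s n))" for w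
    using sublist_rk1_block_transfer[of N r s s'] sublist_rk1_block_transfer[of N r s' s] assms
    by blast
  then have "rank_one_subshift r s' = rank_one_subshift r s"
    unfolding rank_one_subshift_def by simp
  then show ?thesis
    unfolding rank_one_language_def by simp
qed

definition shift_spacers ::
    "nat \<Rightarrow> nat \<Rightarrow> (nat \<Rightarrow> nat) \<Rightarrow> (nat \<Rightarrow> nat \<Rightarrow> nat) \<Rightarrow> nat \<Rightarrow> nat \<Rightarrow> nat" where
  "shift_spacers N c r s n i =
     (if N \<le> n then (if i < r n then s n i - c else s n i)
      else if Suc n = N \<and> i = r n then s n i + c else s n i)"

lemma rk1_block_shift_spacers:
  assumes "N \<ge> 2" and spacers_ge: "\<And>n i. N \<le> n \<Longrightarrow> i < r n \<Longrightarrow> c \<le> s n i"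
    and "N \<le> n"
  shows "rk1_block r (shift_spacers N c r s) n = rk1_block r s n @ replicate c 1"
  using assms(3)
proof (induction n rule: dec_induct)
  case base
  obtain M where M: "N = Suc M" "M \<ge> 1" using assms(1) by (cases N) auto
  have "rk1_block r (shift_spacers N c r s) M = rk1_block r s M"
    by (rule rk1_block_cong) (auto simp: M shift_spacers_def fun_eq_iff)
  moreover have "map (\<lambda>i. rk1_block r s M @ replicate (shift_spacers N c r s M i) 1) [0..<r M]
      = map (\<lambda>i. rk1_block r s M @ replicate (s M i) 1) [0..<r M]"
    by (simp add: M shift_spacers_def)
  ultimately show ?case
    using M by (simp only: rk1_block_Suc_unfold) (simp add: shift_spacers_def replicate_add)
next
  case (step n)
  let ?B = "rk1_block r s n"
  have n: "n \<ge> 1" "N \<le> n" using step.hyps assms(1) by auto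
  have "map (\<lambda>i. (?B @ replicate c 1) @ replicate (shift_spacers N c r s n i) 1) [0..<r n]
      = map (\<lambda>i. ?B @ replicate (s n i) 1) [0..<r n]"
  proof (rule map_cong[OF refl])
    fix i assume "i \<in> set [0..<r n]"
    then have "c \<le> s n i" using spacers_ge n by auto
    then show "(?B @ replicate c 1) @ replicate (shift_spacers N c r s n i) 1
        = ?B @ replicate (s n i) 1"
      using n \<open>i \<in> set [0..<r n]\<close>
      by (simp add: shift_spacers_def flip: replicate_add)
  qed
  moreover have "shift_spacers N c r s n (r n) = s n (r n)"
    using n by (simp add: shift_spacers_def)
  moreover have "replicate c (1::nat) @ replicate (s n (r n)) 1 = replicate (s n (r n)) 1 @ replicate c 1"
    by (metis add.commute replicate_add)
  ultimately show ?case
    using n step.IH by (simp only: rk1_block_Suc_unfold) simp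
qed

lemma rank_one_language_shift_spacers:
  assumes "N \<ge> 2" and "\<And>n. N \<le> n \<Longrightarrow> r n \<ge> 1"
    and spacers_ge: "\<And>n i. N \<le> n \<Longrightarrow> i < r n \<Longrightarrow> c \<le> s n i"
  shows "rank_one_language r (shift_spacers N c r s) = rank_one_language r s"
proof (rule rank_one_language_eqI[of N])
  fix n assume n: "N \<le> n"
  have B': "rk1_block r (shift_spacers N c r s) n = rk1_block r s n @ replicate c 1"
    using rk1_block_shift_spacers[OF assms(1) spacers_ge n] .
  show "\<exists>m\<ge>1. sublist (rk1_block r s n) (rk1_block r (shift_spacers N c r s) m)"
    using B' n assms(1) by (intro exI[of _ n]) auto
  have "c \<le> s n 0" using assms(2)[OF n] spacers_ge[OF n, of 0] by simp
  then have "replicate (s n 0) (1::nat) = replicate c 1 @ replicate (s n 0 - c) 1"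
    by (simp flip: replicate_add)
  then have "prefix (rk1_block r (shift_spacers N c r s) n) (rk1_block r s n @ replicate (s n 0) 1)"
    using B' by simp
  also have "prefix \<dots> (rk1_block r s (Suc n))"
    using prefix_rk1_block_first_spacer[of n r s] n assms(1) by simp
  finally show "\<exists>m\<ge>1. sublist (rk1_block r (shift_spacers N c r s) n) (rk1_block r s m)"
    by (intro exI[of _ "Suc n"]) (simp add: prefix_imp_sublist)
qed

theorem proposition2:
  fixes r :: "nat \<Rightarrow> nat" and s :: "nat \<Rightarrow> nat \<Rightarrow> nat" and c d :: nat
  assumes "\<forall>n\<ge>1. r n \<ge> 1"
    and "c < d"
    and "\<exists>N. \<forall>n\<ge>N. s n (r n) = 0 \<and> (\<forall>i<r n. s n i \<in> {c, d})
                 \<and> (\<exists>i<r n. s n i = c) \<and> (\<exists>i<r n. s n i = d)"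
  shows "\<exists>s' :: nat \<Rightarrow> nat \<Rightarrow> nat.
           rank_one_language r s' = rank_one_language r s \<and>
           (\<exists>N. \<forall>n\<ge>N. s' n (r n) = 0 \<and> (\<forall>i<r n. s' n i \<in> {0, d - c})
                 \<and> (\<exists>i<r n. s' n i = 0) \<and> (\<exists>i<r n. s' n i = d - c))"
proof -
  obtain N0 where N0: "\<forall>n\<ge>N0. s n (r n) = 0 \<and> (\<forall>i<r n. s n i \<in> {c, d})
                 \<and> (\<exists>i<r n. s n i = c) \<and> (\<exists>i<r n. s n i = d)"
    using assms(3) by blast
  define N where "N = N0 + 2"
  have "rank_one_language r (shift_spacers N c r s) = rank_one_language r s"
  proof (rule rank_one_language_shift_spacers)
    fix n i assume "N \<le> n" "i < r n"
    then have "s n i \<in> {c, d}" using N0 by (simp add: N_def)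
    then show "c \<le> s n i" using assms(2) by auto
  qed (use assms(1) in \<open>auto simp: N_def\<close>)
  moreover have "shift_spacers N c r s n (r n) = 0
      \<and> (\<forall>i<r n. shift_spacers N c r s n i \<in> {0, d - c})
      \<and> (\<exists>i<r n. shift_spacers N c r s n i = 0) \<and> (\<exists>i<r n. shift_spacers N c r s n i = d - c)"
    if "N \<le> n" for n
  proof -
    have "s n (r n) = 0" "\<forall>i<r n. s n i \<in> {c, d}" "\<exists>i<r n. s n i = c" "\<exists>i<r n. s n i = d"
      using N0 that by (auto simp: N_def)
    then show ?thesis
      using that by (auto simp: shift_spacers_def)
  qed
  ultimately show ?thesis by blast
qed

end
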